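(* Let $\gamma>0$ and $s\in(0,1)$, and let $$f_{\rm EH}(x)=(1-s)\,\phi(x;0,1)+s\int_0^\infty \phi(x;0,u)\,H(u;\gamma)\,du,\qquad x\in\mathbb{R},$$ where $\phi(\cdot;0,u)$ is the $N(0,u)$ density and $H(u;\gamma)=\frac{\gamma}{1+u}\{1+\log(1+u)\}^{-1-\gamma}$, $u>0$. Then $f_{\rm EH}(x)\approx |x|^{-1}(\log|x|)^{-1-\gamma}$ for large $|x|$.
   Context: Here $g(x)\approx h(x)$ for large $|x|$ means that $g(x)/h(x)$ converges to a finite positive constant as $|x|\to\infty$. *)

theory Defs
  imports "HOL-Probability.Probability"
begin

definition H_mix :: "real \<Rightarrow> real \<Rightarrow> real" where
  "H_mix \<gamma> u = \<gamma> / (1 + u) * (1 + ln (1 + u)) powr (-1 - \<gamma>)"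

text \<open>The density f_EH; phi(x;0,u) is the N(0,u) density, i.e. normal_density 0 (sqrt u) x
  (the library's normal_density takes the standard deviation).\<close>
definition f_EH :: "real \<Rightarrow> real \<Rightarrow> real \<Rightarrow> real" where
  "f_EH \<gamma> s x = (1 - s) * normal_density 0 1 x
     + s * (LBINT u:{0<..}. normal_density 0 (sqrt u) x * H_mix \<gamma> u)"

end

theory Submission
  imports Defs "HOL-Real_Asymp.Real_Asymp"
begin

(* Substituting u = x^2 t in the mixture integral gives, for x > 1,
     x (2 ln x)^(1+\<gamma>) \<integral> \<phi>(x;0,u) H(u;\<gamma>) du
       = \<integral> \<gamma> levy(t) (x^2 t / (1 + x^2 t)) (2 ln x / (1 + ln (1 + x^2 t)))^(1+\<gamma>) dt,
   where levy is the density of the Levy distribution. The integrand tends to \<gamma> levy(t)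
   as x \<rightarrow> \<infinity>, and it is dominated by the integrable function
   \<gamma> levy(t) (1 + max 0 (- ln t))^(1+\<gamma>), since 2 ln x \<le> ln (1 + x^2 t) - ln t.
   Dominated convergence thus yields the limit s 2^(-1-\<gamma>) \<gamma> \<integral> levy > 0 of the
   normalised density, the Gaussian component being negligible; f_EH is even. *)

lemma continuous_on_tendsto_at_top_imp_bounded:
  fixes h :: "real \<Rightarrow> 'a::real_normed_vector"
  assumes cont: "continuous_on {a..} h" and lim: "(h \<longlongrightarrow> l) at_top"
  shows "\<exists>M. \<forall>y\<ge>a. norm (h y) \<le> M"
proof -
  have "\<forall>\<^sub>F y in at_top. norm (h y) < norm l + 1"
    using order_tendstoD(2)[OF tendsto_norm[OF lim]] by simp
  then obtain Y where Y: "\<And>y. y \<ge> Y \<Longrightarrow> norm (h y) < norm l + 1"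
    by (auto simp: eventually_at_top_linorder)
  have "compact (h ` {a..max a Y})"
    by (rule compact_continuous_image[OF continuous_on_subset[OF cont]]) auto
  then obtain B where "\<And>y. y \<in> {a..max a Y} \<Longrightarrow> norm (h y) \<le> B"
    by (meson compact_imp_bounded bounded_iff image_eqI)
  then have "norm (h y) \<le> max B (norm l + 1)" if "y \<ge> a" for y
    using Y[of y] that by (cases "y \<le> max a Y") force+
  then show ?thesis by blast
qed

lemma tendsto_at_infinity_if_even:
  fixes f :: "real \<Rightarrow> 'a::topological_space"
  assumes even: "\<And>x. f (- x) = f x" and lim: "(f \<longlongrightarrow> c) at_top"
  shows "(f \<longlongrightarrow> c) at_infinity"
  unfolding at_infinity_eq_at_top_bot
  using lim by (intro filterlim_sup) (simp_all add: filterlim_at_bot_mirror even)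

lemma integral_indicator_pos:
  fixes f :: "'a \<Rightarrow> real"
  assumes int: "integrable M (\<lambda>x. indicator A x * f x)"
    and A: "A \<in> sets M" "emeasure M A > 0"
    and pos: "\<And>x. x \<in> A \<Longrightarrow> f x > 0"
  shows "(\<integral>x. indicator A x * f x \<partial>M) > 0"
proof -
  have nonneg: "AE x in M. 0 \<le> indicator A x * f x"
    using pos by (intro AE_I2) (auto simp: indicator_def less_imp_le)
  have "(\<integral>x. indicator A x * f x \<partial>M) \<noteq> 0"
  proof
    assume "(\<integral>x. indicator A x * f x \<partial>M) = 0"
    then have "AE x in M. indicator A x * f x = 0"
      using integral_nonneg_eq_0_iff_AE[OF int nonneg] by simp
    moreover have "x \<notin> A" if "indicator A x * f x = 0" for x
      using that pos[of x] by (cases "x \<in> A") auto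
    ultimately have "AE x in M. x \<notin> A"
      by (rule eventually_mono)
    moreover have "{x \<in> space M. \<not> x \<notin> A} = A"
      using sets.sets_into_space[OF A(1)] by auto
    ultimately show False
      using AE_iff_measurable[OF A(1)] A(2) by simp
  qed
  then show ?thesis
    using integral_nonneg_AE[OF nonneg] by linarith
qed

lemma integrable_powr_atLeast_1:
  fixes p :: real
  assumes "p < -1"
  shows "integrable lborel (\<lambda>t. indicator {1..} t * t powr p)"
proof -
  have "(\<lambda>t::real. t powr p) integrable_on {1..}"
    using has_integral_powr_to_inf[of p 1] assms unfolding integrable_on_def by auto
  then have "(\<lambda>t::real. t powr p) absolutely_integrable_on {1..}"
    by (rule nonnegative_absolutely_integrable_1) auto
  then have "integrable lebesgue (\<lambda>t::real. indicator {1..} t * t powr p)"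
    by (simp add: set_integrable_def)
  then show ?thesis
    by (subst (asm) integrable_completion) auto
qed

definition levy_density :: "real \<Rightarrow> real" where
  "levy_density t = exp (- 1 / (2 * t)) / (t * sqrt (2 * pi * t))"

lemma levy_density_pos: "t > 0 \<Longrightarrow> levy_density t > 0"
  unfolding levy_density_def by simp

lemma levy_density_le_powr:
  assumes "1 \<le> t"
  shows "levy_density t \<le> t powr (-3/2) / sqrt (2 * pi)"
proof -
  have "t powr (3/2) = t powr (1 + 1/2)"
    by simp
  also have "\<dots> = t * sqrt t"
    using assms by (subst powr_add) (simp add: powr_half_sqrt)
  finally have "t powr (-3/2) = 1 / (t * sqrt t)"
    by (simp add: powr_minus divide_simps)
  moreover have "exp (- 1 / (2 * t)) \<le> 1"
    using assms by simp
  ultimately show ?thesis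
    using assms unfolding levy_density_def by (simp add: real_sqrt_mult divide_simps)
qed

lemma levy_density_inverse:
  assumes "t > 0"
  shows "levy_density t = (1/t) * sqrt (1/t) * exp (- (1/t) / 2) / sqrt (2 * pi)"
  using assms unfolding levy_density_def
  by (simp add: real_sqrt_mult real_sqrt_divide field_simps)

lemma integrable_levy_density_log_weight:
  fixes p :: real
  shows "integrable lborel (\<lambda>t. indicator {0<..} t * (levy_density t * (1 + max 0 (- ln t)) powr p))"
proof -
  define h where "h y = y * sqrt y * exp (- y / 2) * (1 + ln y) powr p" for y
  have "1 + ln y > 0" if "y \<in> {1..}" for y :: real
  proof -
    have "ln y \<ge> 0" using that by simp
    then show ?thesis by linarith
  qed
  then have "continuous_on {1..} h"
    unfolding h_def by (intro continuous_intros) force+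
  moreover have "(h \<longlongrightarrow> 0) at_top"
    unfolding h_def by real_asymp
  ultimately obtain M where M: "\<And>y. y \<ge> 1 \<Longrightarrow> \<bar>h y\<bar> \<le> M"
    using continuous_on_tendsto_at_top_imp_bounded by fastforce
  have M_nonneg: "M \<ge> 0"
    using M[of 1] by linarith
  define c where "c = 1 / sqrt (2 * pi)"
  have c: "c > 0" unfolding c_def by simp
  let ?w = "\<lambda>t. levy_density t * (1 + max 0 (- ln t)) powr p"
  (* For t < 1 the integrand is c * h (1/t) with h bounded; for t \<ge> 1 it is O(t powr (-3/2)). *)
  let ?bound = "\<lambda>t. indicator {0<..<1} t * (c * M) + c * (indicator {1..} t * t powr (-3/2))"
  have bound_integrable: "integrable lborel ?bound"
  proof (rule Bochner_Integration.integrable_add)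
    show "integrable lborel (\<lambda>t. indicator {0<..<1::real} t * (c * M))"
      by (intro integrable_mult_left integrable_real_indicator) simp_all
    show "integrable lborel (\<lambda>t. c * (indicator {1..} t * t powr (-3/2)))"
      using integrable_powr_atLeast_1[of "-3/2"] by simp
  qed
  moreover have "(\<lambda>t. indicator {0<..} t * ?w t) \<in> borel_measurable lborel"
    unfolding levy_density_def by measurable
  moreover have "norm (indicator {0<..} t * ?w t) \<le> norm (?bound t)" for t :: real
  proof -
    have "?bound t \<ge> 0"
      using M_nonneg c by (simp add: indicator_def)
    moreover consider "t \<le> 0" | "0 < t" "t < 1" | "1 \<le> t" by linarith
    then have "\<bar>indicator {0<..} t * ?w t\<bar> \<le> ?bound t"
    proof cases
      case 1
      then show ?thesis
        using M_nonneg c by (simp add: indicator_def)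
    next
      case 2
      then have "max 0 (- ln t) = ln (1/t)" by (simp add: ln_div)
      then have "?w t = c * h (1/t)"
        using 2 unfolding levy_density_inverse[OF \<open>t > 0\<close>] h_def c_def by simp
      moreover have "\<bar>h (1/t)\<bar> \<le> M" using 2 by (intro M) simp
      ultimately show ?thesis
        using 2 c by (simp add: indicator_def abs_mult)
    next
      case 3
      then have "?w t = levy_density t" by simp
      moreover have "levy_density t \<le> c * t powr (-3/2)"
        using levy_density_le_powr[OF 3] unfolding c_def by simp
      ultimately show ?thesis
        using 3 c levy_density_pos[of t] by (simp add: indicator_def)
    qed
    ultimately show ?thesis
      by simp
  qed
  ultimately show ?thesis
    by (blast intro: Bochner_Integration.integrable_bound AE_I2)
qed

lemma integrable_levy_density: "integrable lborel (\<lambda>t. indicator {0<..} t * levy_density t)"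
proof -
  have "1 + max 0 (- ln t) \<noteq> 0" for t :: real
    by (cases "ln t \<le> 0") auto
  then show ?thesis
    using integrable_levy_density_log_weight[of 0] by simp
qed

lemma integral_levy_density_pos: "(\<integral>t. indicator {0<..} t * levy_density t \<partial>lborel) > 0"
proof (rule integral_indicator_pos[OF integrable_levy_density])
  have "emeasure lborel {0<..1::real} \<le> emeasure lborel {0::real<..}"
    by (rule emeasure_mono) auto
  then show "emeasure lborel {0::real<..} > 0"
    using order_less_le_trans[OF zero_less_one] by simp
qed (auto simp: levy_density_pos)

lemma two_ln_div_ln_le:
  fixes x t :: real
  assumes x: "x > 0" and t: "t > 0"
  shows "2 * ln x / (1 + ln (1 + x\<^sup>2 * t)) \<le> 1 + max 0 (- ln t)"
proof -
  define L where "L = ln (1 + x\<^sup>2 * t)"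
  have xt: "x\<^sup>2 * t > 0" using x t by simp
  then have L: "L \<ge> 0" unfolding L_def by simp
  have "2 * ln x = ln (x\<^sup>2)"
    using x by (simp add: ln_realpow)
  also have "\<dots> \<le> ln ((1 + x\<^sup>2 * t) / t)"
    using x t by (intro ln_mono) (simp_all add: pos_le_divide_eq)
  also have "\<dots> = L - ln t"
    unfolding L_def using t xt by (simp add: ln_div)
  also have "\<dots> \<le> (1 + max 0 (- ln t)) * (1 + L)"
    using mult_nonneg_nonneg[OF max.cobounded1 L, of "- ln t"] max.cobounded2[of "- ln t" 0]
    unfolding distrib_left distrib_right by linarith
  finally show ?thesis
    using L unfolding L_def[symmetric] by (simp add: pos_divide_le_eq)
qed

definition rescaled_integrand :: "real \<Rightarrow> real \<Rightarrow> real \<Rightarrow> real" where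
  "rescaled_integrand \<gamma> x t = \<gamma> * levy_density t * (x\<^sup>2 * t / (1 + x\<^sup>2 * t))
     * (2 * ln x / (1 + ln (1 + x\<^sup>2 * t))) powr (1 + \<gamma>)"

lemma rescaled_integrand_bound:
  assumes \<gamma>: "\<gamma> \<ge> 0" and x: "x \<ge> 1" and t: "t > 0"
  shows "\<bar>rescaled_integrand \<gamma> x t\<bar> \<le> \<gamma> * levy_density t * (1 + max 0 (- ln t)) powr (1 + \<gamma>)"
proof -
  have xt: "x\<^sup>2 * t > 0" using x t by simp
  have ratio: "0 \<le> 2 * ln x / (1 + ln (1 + x\<^sup>2 * t))"
    using x xt by simp
  have "x\<^sup>2 * t / (1 + x\<^sup>2 * t) \<le> 1"
    using xt by simp
  moreover have "(2 * ln x / (1 + ln (1 + x\<^sup>2 * t))) powr (1 + \<gamma>) \<le> (1 + max 0 (- ln t)) powr (1 + \<gamma>)"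
    using two_ln_div_ln_le[of x t] ratio x t \<gamma> by (intro powr_mono2) auto
  moreover have "0 \<le> \<gamma> * levy_density t"
    using \<gamma> levy_density_pos[OF t] by simp
  ultimately have "rescaled_integrand \<gamma> x t \<le> \<gamma> * levy_density t * 1 * (1 + max 0 (- ln t)) powr (1 + \<gamma>)"
    unfolding rescaled_integrand_def using xt \<gamma> levy_density_pos[OF t]
    by (intro mult_mono) auto
  moreover have "rescaled_integrand \<gamma> x t \<ge> 0"
    unfolding rescaled_integrand_def using \<gamma> levy_density_pos[OF t] xt ratio by simp
  ultimately show ?thesis
    by simp
qed

lemma tendsto_rescaled_integrand:
  assumes t: "t > 0"
  shows "((\<lambda>x. rescaled_integrand \<gamma> x t) \<longlongrightarrow> \<gamma> * levy_density t) at_top"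
proof -
  have fraction: "((\<lambda>x::real. x\<^sup>2 * t / (1 + x\<^sup>2 * t)) \<longlongrightarrow> 1) at_top"
    using t by real_asymp
  have "((\<lambda>x::real. 2 * ln x / (1 + ln (1 + x\<^sup>2 * t))) \<longlongrightarrow> 1) at_top"
    using t by real_asymp
  from tendsto_powr[OF this tendsto_const, of "1 + \<gamma>"]
  have ratio: "((\<lambda>x. (2 * ln x / (1 + ln (1 + x\<^sup>2 * t))) powr (1 + \<gamma>)) \<longlongrightarrow> 1) at_top"
    by simp
  have "((\<lambda>x. rescaled_integrand \<gamma> x t) \<longlongrightarrow> \<gamma> * levy_density t * 1 * 1) at_top"
    unfolding rescaled_integrand_def by (intro tendsto_mult tendsto_const fraction ratio)
  then show ?thesis
    by simp
qed

lemma tendsto_integral_rescaled_integrand: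
  assumes \<gamma>: "\<gamma> \<ge> 0"
  shows "((\<lambda>x. \<integral>t. indicator {0<..} t * rescaled_integrand \<gamma> x t \<partial>lborel)
           \<longlongrightarrow> \<gamma> * (\<integral>t. indicator {0<..} t * levy_density t \<partial>lborel)) at_top"
proof -
  let ?w = "\<lambda>t. indicator {0<..} t * (\<gamma> * levy_density t * (1 + max 0 (- ln t)) powr (1 + \<gamma>))"
  have lim: "((\<lambda>x. \<integral>t. indicator {0<..} t * rescaled_integrand \<gamma> x t \<partial>lborel)
           \<longlongrightarrow> (\<integral>t. indicator {0<..} t * (\<gamma> * levy_density t) \<partial>lborel)) at_top"
  proof (rule integral_dominated_convergence_at_top[where w = ?w])
    show "(\<lambda>t. indicator {0<..} t * (\<gamma> * levy_density t)) \<in> borel_measurable lborel"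
      unfolding levy_density_def by measurable
    show "(\<lambda>t. indicator {0<..} t * rescaled_integrand \<gamma> x t) \<in> borel_measurable lborel" for x
      unfolding rescaled_integrand_def levy_density_def by measurable
    show "integrable lborel ?w"
      using integrable_mult_right[OF integrable_levy_density_log_weight[of "1 + \<gamma>"], of \<gamma>]
      by (simp add: mult_ac)
    show "AE t in lborel. ((\<lambda>x. indicator {0<..} t * rescaled_integrand \<gamma> x t)
            \<longlongrightarrow> indicator {0<..} t * (\<gamma> * levy_density t)) at_top"
      by (intro AE_I2) (auto simp: indicator_def intro: tendsto_rescaled_integrand)
    show "\<forall>\<^sub>F x in at_top. AE t in lborel. norm (indicator {0<..} t * rescaled_integrand \<gamma> x t) \<le> ?w t"
      using eventually_ge_at_top[of 1]
      by eventually_elim (auto simp: indicator_def intro!: AE_I2 rescaled_integrand_bound \<gamma>)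
  qed
  have "(\<integral>t. indicator {0<..} t * (\<gamma> * levy_density t) \<partial>lborel)
      = \<gamma> * (\<integral>t. indicator {0<..} t * levy_density t \<partial>lborel)"
    by (subst mult.left_commute) (rule integral_mult_right_zero)
  with lim show ?thesis
    by (simp only:)
qed

lemma normal_density_H_mix_rescale:
  assumes x: "x \<ge> 1" and t: "t > 0"
  shows "x * (2 * ln x) powr (1 + \<gamma>) * (x\<^sup>2 * (normal_density 0 (sqrt (x\<^sup>2 * t)) x * H_mix \<gamma> (x\<^sup>2 * t)))
    = rescaled_integrand \<gamma> x t"
proof -
  define L where "L = 1 + ln (1 + x\<^sup>2 * t)"
  define S where "S = sqrt (2 * pi * t)"
  have xt: "x\<^sup>2 * t > 0" using x t by simp
  have S: "S > 0" unfolding S_def using t by simp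
  have "sqrt (2 * pi * (sqrt (x\<^sup>2 * t))\<^sup>2) = x * S"
    unfolding S_def using x t by (simp add: real_sqrt_mult mult_ac)
  moreover have "- (x - 0)\<^sup>2 / (2 * (sqrt (x\<^sup>2 * t))\<^sup>2) = - 1 / (2 * t)"
    using x t by simp
  ultimately have normal: "normal_density 0 (sqrt (x\<^sup>2 * t)) x = exp (- 1 / (2 * t)) / (x * S)"
    unfolding normal_density_def by simp
  have "L powr (- 1 - \<gamma>) = inverse (L powr (1 + \<gamma>))"
    using powr_minus[of L "1 + \<gamma>"] by (simp add: algebra_simps)
  then have ratio: "(2 * ln x) powr (1 + \<gamma>) * L powr (- 1 - \<gamma>) = (2 * ln x / L) powr (1 + \<gamma>)"
    by (simp only: divide_inverse powr_mult inverse_powr)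
  have algebra: "x * P * (x\<^sup>2 * (E / (x * S) * (\<gamma> / D * Q)))
      = \<gamma> * (E / (t * S)) * (x\<^sup>2 * t / D) * (P * Q)" if "D \<noteq> 0" for D E P Q
    using that x t S by (simp add: field_simps)
  have "1 + x\<^sup>2 * t \<noteq> 0"
    using xt by linarith
  then show ?thesis
    unfolding rescaled_integrand_def levy_density_def H_mix_def normal
      L_def[symmetric] S_def[symmetric] ratio[symmetric]
    by (rule algebra)
qed

lemma mixture_integral_rescale:
  assumes x: "x \<ge> 1"
  shows "x * (2 * ln x) powr (1 + \<gamma>) * (LBINT u:{0<..}. normal_density 0 (sqrt u) x * H_mix \<gamma> u)
    = (\<integral>t. indicator {0<..} t * rescaled_integrand \<gamma> x t \<partial>lborel)"
proof -
  let ?P = "x * (2 * ln x) powr (1 + \<gamma>)"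
  let ?g = "\<lambda>u. indicator {0<..} u * (normal_density 0 (sqrt u) x * H_mix \<gamma> u)"
  have "?P * (x\<^sup>2 * (?g (x\<^sup>2 * t))) = indicator {0<..} t * rescaled_integrand \<gamma> x t" for t
  proof (cases "t > 0")
    case True
    with x show ?thesis
      by (simp add: normal_density_H_mix_rescale)
  next
    case False
    then have "\<not> x\<^sup>2 * t > 0"
      by (simp add: zero_less_mult_iff)
    with False show ?thesis
      by simp
  qed
  moreover have "(LBINT u:{0<..}. normal_density 0 (sqrt u) x * H_mix \<gamma> u)
      = x\<^sup>2 * (\<integral>t. ?g (x\<^sup>2 * t) \<partial>lborel)"
    using lborel_integral_real_affine[of "x\<^sup>2" ?g 0] x
    by (simp add: set_lebesgue_integral_def)
  ultimately show ?thesis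
    by (simp flip: integral_mult_right_zero)
qed

lemma f_EH_uminus: "f_EH \<gamma> s (- x) = f_EH \<gamma> s x"
  unfolding f_EH_def normal_density_def by simp

lemma f_EH_normalized_eq:
  assumes x: "x > 1"
  shows "f_EH \<gamma> s x / (inverse \<bar>x\<bar> * ln \<bar>x\<bar> powr (-1 - \<gamma>))
    = (1 - s) * (normal_density 0 1 x * x * ln x powr (1 + \<gamma>))
      + s * 2 powr (-1 - \<gamma>) * (\<integral>t. indicator {0<..} t * rescaled_integrand \<gamma> x t \<partial>lborel)"
proof -
  define I where "I = (LBINT u:{0<..}. normal_density 0 (sqrt u) x * H_mix \<gamma> u)"
  define P where "P = ln x powr (1 + \<gamma>)"
  have P: "P > 0"
    unfolding P_def using x by simp
  have P_inverse: "ln x powr (-1 - \<gamma>) = inverse P"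
    unfolding P_def using powr_minus[of "ln x" "1 + \<gamma>"] by (simp add: algebra_simps)
  have abs_x: "\<bar>x\<bar> = x"
    using x by simp
  have "f_EH \<gamma> s x / (inverse \<bar>x\<bar> * ln \<bar>x\<bar> powr (-1 - \<gamma>))
      = ((1 - s) * normal_density 0 1 x + s * I) * x * P"
    unfolding f_EH_def I_def[symmetric] abs_x P_inverse using x P by (simp add: field_simps)
  also have "\<dots> = (1 - s) * (normal_density 0 1 x * x * P)
      + s * 2 powr (-1 - \<gamma>) * (2 powr (1 + \<gamma>) * P * x * I)"
    by (simp add: algebra_simps flip: powr_add)
  also have "2 powr (1 + \<gamma>) * P * x * I = x * (2 * ln x) powr (1 + \<gamma>) * I"
    unfolding P_def by (simp add: powr_mult)
  also have "\<dots> = (\<integral>t. indicator {0<..} t * rescaled_integrand \<gamma> x t \<partial>lborel)"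
    unfolding I_def using x by (simp add: mixture_integral_rescale)
  finally show ?thesis
    unfolding P_def .
qed

lemma tendsto_f_EH_normalized_at_top:
  assumes "\<gamma> \<ge> 0"
  shows "((\<lambda>x. f_EH \<gamma> s x / (inverse \<bar>x\<bar> * ln \<bar>x\<bar> powr (-1 - \<gamma>)))
           \<longlongrightarrow> s * 2 powr (-1 - \<gamma>) * (\<gamma> * (\<integral>t. indicator {0<..} t * levy_density t \<partial>lborel))) at_top"
    (is "(?f \<longlongrightarrow> ?c) at_top")
proof -
  let ?g = "\<lambda>x. (1 - s) * (normal_density 0 1 x * x * ln x powr (1 + \<gamma>))
      + s * 2 powr (-1 - \<gamma>) * (\<integral>t. indicator {0<..} t * rescaled_integrand \<gamma> x t \<partial>lborel)"
  have gaussian: "((\<lambda>x. normal_density 0 1 x * x * ln x powr (1 + \<gamma>)) \<longlongrightarrow> 0) at_top"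
    unfolding normal_density_def by real_asymp
  have "(?g \<longlongrightarrow> (1 - s) * 0 + ?c) at_top"
    using assms
    by (intro gaussian tendsto_integral_rescaled_integrand tendsto_add tendsto_mult tendsto_const)
  moreover have "\<forall>\<^sub>F x in at_top. ?g x = ?f x"
    using eventually_gt_at_top[of 1] by eventually_elim (rule f_EH_normalized_eq[symmetric])
  ultimately show ?thesis
    by (simp add: Lim_transform_eventually)
qed

theorem proposition2p1:
  fixes \<gamma> s :: real
  assumes "\<gamma> > 0" and "0 < s" and "s < 1"
  shows "\<exists>c>0. ((\<lambda>x. f_EH \<gamma> s x / (inverse \<bar>x\<bar> * ln \<bar>x\<bar> powr (-1 - \<gamma>)))
                  \<longlongrightarrow> c) at_infinity"
proof (intro exI conjI)
  show "s * 2 powr (-1 - \<gamma>) * (\<gamma> * (\<integral>t. indicator {0<..} t * levy_density t \<partial>lborel)) > 0"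
    using assms integral_levy_density_pos by simp
  show "((\<lambda>x. f_EH \<gamma> s x / (inverse \<bar>x\<bar> * ln \<bar>x\<bar> powr (-1 - \<gamma>)))
      \<longlongrightarrow> s * 2 powr (-1 - \<gamma>) * (\<gamma> * (\<integral>t. indicator {0<..} t * levy_density t \<partial>lborel))) at_infinity"
    using assms(1) tendsto_f_EH_normalized_at_top
    by (intro tendsto_at_infinity_if_even) (simp_all add: f_EH_uminus)
qed

end
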